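(* Let $V$ be a real vector space of dimension $m=p+q\ge 3$ equipped with a non-degenerate symmetric inner product $(\cdot,\cdot)$ of signature $(p,q)$ (arbitrary), let $R$ be an algebraic curvature tensor on $V$, and let $1\le k\le m-1$. If $R$ is $k$ Osserman, then $\mathcal{J}_R(x)$ is nilpotent for every complex null vector $x\in\mathcal{N}$.
   Context: An algebraic curvature tensor is $R\in\otimes^4V^*$ with $R(x,y,z,w)=R(z,w,x,y)=-R(y,x,z,w)$ and $R(x,y,z,w)+R(y,z,x,w)+R(z,x,y,w)=0$. The Jacobi operator $\mathcal{J}_R(x)$ is the linear map of $V$ defined by $(\mathcal{J}_R(x)y,w)=R(y,x,x,w)$. For a non-degenerate $k$-dimensional subspace $\sigma\subset V$ with orthonormal basis $\{e_1,\dots,e_k\}$, the higher order Jacobi operator is $\mathcal{J}_R(\sigma)=\sum_{i=1}^k (e_i,e_i)\mathcal{J}_R(e_i)$ (independent of the orthonormal basis). $R$ is called $k$ Osserman if the eigenvalues of $\mathcal{J}_R(\sigma)$ are constant on the Grassmannian of non-degenerate $k$-planes $\sigma\subset V$. The inner product, $R$ and $\mathcal{J}_R$ are extended complex-multilinearly to $V_{\mathbb{C}}=V\otimes\mathbb{C}$; $\mathcal{N}=\{v\in V_{\mathbb{C}}:(v,v)=0\}$ is the set of complex null vectors. A linear map $A$ of $V_{\mathbb{C}}$ is nilpotent if $A^m=0$, equivalently $\operatorname{trace}(A^i)=0$ for $1\le i\le m$. *)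

theory Defs
  imports "HOL-Analysis.Analysis"
begin

text \<open>The model space V is real^'n (dimension CARD('n)); the inner product is
given by a real symmetric Gram matrix G; a 4-tensor R on V is given by its
coefficient array R i j k l with respect to the standard basis.
Everything is extended complex-multilinearly to complex^'n.\<close>

definition rinner :: "real^'n^'n \<Rightarrow> real^'n \<Rightarrow> real^'n \<Rightarrow> real" where
  "rinner G u v = (\<Sum>i\<in>UNIV. \<Sum>j\<in>UNIV. G$i$j * u$i * v$j)"

definition cinner :: "real^'n^'n \<Rightarrow> complex^'n \<Rightarrow> complex^'n \<Rightarrow> complex" where
  "cinner G u v = (\<Sum>i\<in>UNIV. \<Sum>j\<in>UNIV. of_real (G$i$j) * u$i * v$j)"

definition nondeg_sym_inner :: "real^'n^'n \<Rightarrow> bool" where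
  "nondeg_sym_inner G \<longleftrightarrow> transpose G = G \<and>
     (\<forall>u. (\<forall>v. rinner G u v = 0) \<longrightarrow> u = 0)"

definition rtens :: "('n::finite \<Rightarrow> 'n \<Rightarrow> 'n \<Rightarrow> 'n \<Rightarrow> real) \<Rightarrow>
    real^'n \<Rightarrow> real^'n \<Rightarrow> real^'n \<Rightarrow> real^'n \<Rightarrow> real" where
  "rtens R x y z w = (\<Sum>i\<in>UNIV. \<Sum>j\<in>UNIV. \<Sum>k\<in>UNIV. \<Sum>l\<in>UNIV.
      R i j k l * x$i * y$j * z$k * w$l)"

definition ctens :: "('n::finite \<Rightarrow> 'n \<Rightarrow> 'n \<Rightarrow> 'n \<Rightarrow> real) \<Rightarrow>
    complex^'n \<Rightarrow> complex^'n \<Rightarrow> complex^'n \<Rightarrow> complex^'n \<Rightarrow> complex" where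
  "ctens R x y z w = (\<Sum>i\<in>UNIV. \<Sum>j\<in>UNIV. \<Sum>k\<in>UNIV. \<Sum>l\<in>UNIV.
      of_real (R i j k l) * x$i * y$j * z$k * w$l)"

definition algebraic_curvature_tensor :: "('n::finite \<Rightarrow> 'n \<Rightarrow> 'n \<Rightarrow> 'n \<Rightarrow> real) \<Rightarrow> bool" where
  "algebraic_curvature_tensor R \<longleftrightarrow>
     (\<forall>x y z w. rtens R x y z w = rtens R z w x y \<and>
                rtens R x y z w = - rtens R y x z w \<and>
                rtens R x y z w + rtens R y z x w + rtens R z x y w = 0)"

definition jacobi :: "real^'n^'n \<Rightarrow> ('n::finite \<Rightarrow> 'n \<Rightarrow> 'n \<Rightarrow> 'n \<Rightarrow> real) \<Rightarrow> real^'n \<Rightarrow> real^'n^'n" where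
  "jacobi G R x = (THE M. \<forall>y w. rinner G (M *v y) w = rtens R y x x w)"

definition cjacobi :: "real^'n^'n \<Rightarrow> ('n::finite \<Rightarrow> 'n \<Rightarrow> 'n \<Rightarrow> 'n \<Rightarrow> real) \<Rightarrow> complex^'n \<Rightarrow> complex^'n^'n" where
  "cjacobi G R x = (THE M. \<forall>y w. cinner G (M *v y) w = ctens R y x x w)"

definition nondeg_subspace :: "real^'n^'n \<Rightarrow> (real^'n) set \<Rightarrow> bool" where
  "nondeg_subspace G \<sigma> \<longleftrightarrow> subspace \<sigma> \<and>
     (\<forall>u\<in>\<sigma>. (\<forall>v\<in>\<sigma>. rinner G u v = 0) \<longrightarrow> u = 0)"

definition orthonormal_basis :: "real^'n^'n \<Rightarrow> (real^'n) set \<Rightarrow> nat \<Rightarrow> (nat \<Rightarrow> real^'n) \<Rightarrow> bool" where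
  "orthonormal_basis G \<sigma> k e \<longleftrightarrow>
     (\<forall>i<k. e i \<in> \<sigma>) \<and> span (e ` {..<k}) = \<sigma> \<and>
     (\<forall>i<k. \<forall>j<k. i \<noteq> j \<longrightarrow> rinner G (e i) (e j) = 0) \<and>
     (\<forall>i<k. rinner G (e i) (e i) = 1 \<or> rinner G (e i) (e i) = -1)"

definition higher_jacobi :: "real^'n^'n \<Rightarrow> ('n::finite \<Rightarrow> 'n \<Rightarrow> 'n \<Rightarrow> 'n \<Rightarrow> real) \<Rightarrow> nat \<Rightarrow> (nat \<Rightarrow> real^'n) \<Rightarrow> real^'n^'n" where
  "higher_jacobi G R k e = (\<Sum>i<k. rinner G (e i) (e i) *\<^sub>R jacobi G R (e i))"

definition eigenvalues :: "real^'n^'n \<Rightarrow> complex set" where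
  "eigenvalues M = {c. \<exists>v::complex^'n. v \<noteq> 0 \<and>
      (\<chi> i j. complex_of_real (M$i$j)) *v v = c *s v}"

definition k_osserman :: "real^'n^'n \<Rightarrow> ('n::finite \<Rightarrow> 'n \<Rightarrow> 'n \<Rightarrow> 'n \<Rightarrow> real) \<Rightarrow> nat \<Rightarrow> bool" where
  "k_osserman G R k \<longleftrightarrow> (\<exists>S. \<forall>\<sigma> e. nondeg_subspace G \<sigma> \<and> dim \<sigma> = k \<and>
      orthonormal_basis G \<sigma> k e \<longrightarrow> eigenvalues (higher_jacobi G R k e) = S)"

definition nilpotent :: "complex^'n^'n \<Rightarrow> bool" where
  "nilpotent A \<longleftrightarrow> (\<exists>N. ((\<lambda>v. A *v v) ^^ N) = (\<lambda>v. 0))"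

end

theory Submission
  imports Defs "Jordan_Normal_Form.Jordan_Normal_Form_Existence" "HOL-Complex_Analysis.Conformal_Mappings"
begin

text \<open>Write the complex null vector as \<open>x = a + i b\<close>, so that \<open>(a, a) = (b, b)\<close> and \<open>(a, b) = 0\<close>.
  The basic case is \<open>x = f\<^sub>0 + t\<^sub>0 f\<^sub>1\<close> for an orthonormal pair with
  \<open>\<epsilon>\<^sub>0 + t\<^sub>0\<^sup>2 \<epsilon>\<^sub>1 = 0\<close>. Extend the pair to an orthonormal \<open>(k+1)\<close>-frame \<open>F\<close>. For real \<open>s\<close>
  with \<open>q(s) = \<epsilon>\<^sub>0 + s\<^sup>2 \<epsilon>\<^sub>1 \<noteq> 0\<close> the vectors \<open>F\<^sub>0 + s F\<^sub>1, F\<^sub>2, \<dots>, F\<^sub>k\<close> span a non-degenerate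
  \<open>k\<close>-plane whose higher order Jacobi operator is \<open>J(F\<^sub>0 + s F\<^sub>1)/q(s) + B\<close> with \<open>B\<close> independent
  of \<open>s\<close>. The \<open>k\<close> Osserman condition fixes its spectrum, so its characteristic polynomial,
  a continuous function of \<open>s\<close> with finitely many possible values, is a constant \<open>\<Prod>(\<mu> - a)\<close>.
  Hence \<open>J(F\<^sub>0 + t F\<^sub>1) + q(t) B\<close> has characteristic polynomial \<open>\<Prod>(\<mu> - q(t) a)\<close> for real \<open>t\<close>,
  and by analytic continuation for all complex \<open>t\<close>; at \<open>t = t\<^sub>0\<close> it is \<open>\<mu>\<^sup>m\<close>, so \<open>J(x)\<close> is
  nilpotent. If \<open>(a, a) \<noteq> 0\<close>, then \<open>x\<close> is a multiple of such a vector with \<open>t\<^sub>0 = i\<close>; a real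
  null vector is half the sum of an orthonormal pair of opposite signs (\<open>t\<^sub>0 = 1\<close>); and a
  totally null pair \<open>a, b\<close> is the limit of pairs with \<open>(a, a) = (b, b) \<noteq> 0\<close>, reached once more
  by analytic continuation.\<close>

no_notation Matrix.vec_index (infixl \<open>$\<close> 100)

section \<open>Complexification and the Jacobi operator\<close>

definition of_real_vec :: "real^'n \<Rightarrow> 'a::real_algebra_1^'n" where
  "of_real_vec x = (\<chi> i. of_real (x$i))"

definition of_real_mat :: "real^'n^'m \<Rightarrow> 'a::real_algebra_1^'n^'m" where
  "of_real_mat A = (\<chi> i j. of_real (A$i$j))"

definition mat_scale :: "'a::times \<Rightarrow> 'a^'n^'m \<Rightarrow> 'a^'n^'m" where
  "mat_scale c A = (\<chi> i j. c * A$i$j)"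

definition gram_form :: "real^'n^'n \<Rightarrow> 'a::real_algebra_1^'n \<Rightarrow> 'a^'n \<Rightarrow> 'a" where
  "gram_form G u v = (\<Sum>i\<in>UNIV. \<Sum>j\<in>UNIV. of_real (G$i$j) * u$i * v$j)"

definition tensor4 :: "('n::finite \<Rightarrow> 'n \<Rightarrow> 'n \<Rightarrow> 'n \<Rightarrow> real) \<Rightarrow>
    'a::real_algebra_1^'n \<Rightarrow> 'a^'n \<Rightarrow> 'a^'n \<Rightarrow> 'a^'n \<Rightarrow> 'a" where
  "tensor4 R x y z w = (\<Sum>i\<in>UNIV. \<Sum>j\<in>UNIV. \<Sum>k\<in>UNIV. \<Sum>l\<in>UNIV.
      of_real (R i j k l) * x$i * y$j * z$k * w$l)"

text \<open>The entry \<open>(j, l)\<close> of \<open>curv_matrix R x\<close> is \<open>R(e\<^sub>l, x, x, e\<^sub>j)\<close>, so that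
  \<open>w \<bullet> (curv_matrix R x *v y) = R(y, x, x, w)\<close>.\<close>
definition curv_matrix :: "('n::finite \<Rightarrow> 'n \<Rightarrow> 'n \<Rightarrow> 'n \<Rightarrow> real) \<Rightarrow> 'a::real_algebra_1^'n \<Rightarrow> 'a^'n^'n" where
  "curv_matrix R x = (\<chi> j l. \<Sum>a\<in>UNIV. \<Sum>b\<in>UNIV. of_real (R l a b j) * x$a * x$b)"

lemma rinner_eq_gram_form: "rinner G = gram_form G"
  by (simp add: fun_eq_iff rinner_def gram_form_def)

lemma cinner_eq_gram_form: "cinner G = gram_form G"
  by (simp add: fun_eq_iff cinner_def gram_form_def)

lemma rtens_eq_tensor4: "rtens R = tensor4 R"
  by (simp add: fun_eq_iff rtens_def tensor4_def)

lemma ctens_eq_tensor4: "ctens R = tensor4 R"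
  by (simp add: fun_eq_iff ctens_def tensor4_def)

lemma of_real_mat_real [simp]: "of_real_mat A = (A :: real^'n^'m)"
  by (simp add: of_real_mat_def Finite_Cartesian_Product.vec_eq_iff)

lemma of_real_mat_mult: "of_real_mat (A ** B) = (of_real_mat A ** of_real_mat B :: 'a::real_algebra_1^_^_)"
  by (simp add: of_real_mat_def matrix_matrix_mult_def Finite_Cartesian_Product.vec_eq_iff)

lemma of_real_mat_1: "of_real_mat (Finite_Cartesian_Product.mat 1) = (Finite_Cartesian_Product.mat 1 :: 'a::real_algebra_1^_^_)"
  by (simp add: of_real_mat_def Finite_Cartesian_Product.mat_def Finite_Cartesian_Product.vec_eq_iff)

lemma of_real_mat_add: "of_real_mat (A + B) = (of_real_mat A + of_real_mat B :: 'a::real_algebra_1^_^_)"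
  by (simp add: of_real_mat_def Finite_Cartesian_Product.vec_eq_iff)

lemma of_real_mat_scaleR: "of_real_mat (c *\<^sub>R A) = mat_scale (of_real c) (of_real_mat A :: 'a::real_algebra_1^_^_)"
  by (simp add: of_real_mat_def mat_scale_def Finite_Cartesian_Product.vec_eq_iff)

lemma of_real_mat_0 [simp]: "of_real_mat 0 = (0 :: 'a::real_algebra_1^_^_)"
  by (simp add: of_real_mat_def Finite_Cartesian_Product.vec_eq_iff)

lemma of_real_mat_sum_scaleR:
  "of_real_mat (\<Sum>i\<in>I. c i *\<^sub>R A i) = (\<Sum>i\<in>I. mat_scale (of_real (c i)) (of_real_mat (A i)) :: 'a::real_algebra_1^_^_)"
  by (induction I rule: infinite_finite_induct) (simp_all add: of_real_mat_add of_real_mat_scaleR)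

lemma of_real_mat_curv_matrix: "of_real_mat (curv_matrix R x) = (curv_matrix R (of_real_vec x) :: 'a::real_algebra_1^_^_)"
  by (simp add: of_real_mat_def curv_matrix_def of_real_vec_def Finite_Cartesian_Product.vec_eq_iff)

lemma of_real_vec_add: "of_real_vec (a + b) = (of_real_vec a + of_real_vec b :: 'a::real_algebra_1^_)"
  by (simp add: of_real_vec_def Finite_Cartesian_Product.vec_eq_iff)

lemma of_real_vec_scaleR: "of_real_vec (c *\<^sub>R a) = of_real c *s (of_real_vec a :: 'a::real_algebra_1^_)"
  by (simp add: of_real_vec_def Finite_Cartesian_Product.vec_eq_iff)

lemma of_real_vec_0 [simp]: "of_real_vec 0 = (0 :: 'a::real_algebra_1^_)"
  by (simp add: of_real_vec_def Finite_Cartesian_Product.vec_eq_iff)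

lemma complex_vec_decompose: "x = of_real_vec (\<chi> i. Re (x$i)) + \<i> *s of_real_vec (\<chi> i. Im (x$i))"
  by (simp add: of_real_vec_def Finite_Cartesian_Product.vec_eq_iff complex_eq_iff)

lemma mat_scale_index [simp]: "mat_scale c A $ i $ j = c * A $ i $ j"
  by (simp add: mat_scale_def)

lemma mat_scale_add: "mat_scale c (A + B) = mat_scale c A + mat_scale c (B :: 'a::semiring^_^_)"
  by (simp add: Finite_Cartesian_Product.vec_eq_iff algebra_simps)

lemma mat_scale_mat_scale: "mat_scale a (mat_scale b A) = mat_scale (a * b) (A :: 'a::semigroup_mult^_^_)"
  by (simp add: Finite_Cartesian_Product.vec_eq_iff mult.assoc)

lemma mat_scale_1 [simp]: "mat_scale 1 A = (A :: 'a::monoid_mult^_^_)"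
  by (simp add: Finite_Cartesian_Product.vec_eq_iff)

lemma mat_scale_0 [simp]: "mat_scale 0 A = (0 :: 'a::mult_zero^_^_)"
  by (simp add: Finite_Cartesian_Product.vec_eq_iff)

lemma mat_scale_matrix_mult: "mat_scale c (A ** B) = A ** mat_scale c (B :: 'a::comm_semiring_1^_^_)"
  by (simp add: Finite_Cartesian_Product.vec_eq_iff matrix_matrix_mult_def sum_distrib_left mult_ac)

lemma curv_matrix_scale: "curv_matrix R (c *s x) = mat_scale (c^2) (curv_matrix R (x :: 'a::{real_algebra_1,comm_ring_1}^_))"
  by (simp add: curv_matrix_def Finite_Cartesian_Product.vec_eq_iff sum_distrib_left power2_eq_square mult_ac)

lemma invertible_matrix_inv:
  assumes "invertible A"
  shows "A ** matrix_inv A = Finite_Cartesian_Product.mat 1" "matrix_inv A ** A = Finite_Cartesian_Product.mat 1"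
  using someI_ex[OF assms[unfolded invertible_def]] by (simp_all add: matrix_inv_def)

lemma sum_rotate4:
  "(\<Sum>j\<in>A. \<Sum>l\<in>B. \<Sum>a\<in>C. \<Sum>b\<in>D. f j l a b) = (\<Sum>l\<in>B. \<Sum>a\<in>C. \<Sum>b\<in>D. \<Sum>j\<in>A. f j l a b)"
  by (simp only: sum.swap[of _ A])

lemma gram_form_eq_sum:
  fixes u w :: "'a::{real_algebra_1,comm_ring_1}^'n"
  assumes "transpose G = G"
  shows "gram_form G u w = (\<Sum>j\<in>UNIV. w$j * (of_real_mat G *v u)$j)"
proof -
  have "G$i$j = G$j$i" for i j
    using assms by (metis transpose_def vec_lambda_beta)
  then have "gram_form G u w = (\<Sum>i\<in>UNIV. \<Sum>j\<in>UNIV. w$j * (of_real (G$j$i) * u$i))"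
    unfolding gram_form_def by (simp add: mult_ac)
  also have "\<dots> = (\<Sum>j\<in>UNIV. \<Sum>i\<in>UNIV. w$j * (of_real (G$j$i) * u$i))"
    by (rule sum.swap)
  finally show ?thesis
    by (simp add: matrix_vector_mult_def of_real_mat_def sum_distrib_left)
qed

lemma of_real_mat_matrix_inv:
  assumes "invertible G"
  shows "of_real_mat G ** of_real_mat (matrix_inv G) = (Finite_Cartesian_Product.mat 1 :: 'a::real_algebra_1^_^_)"
    "of_real_mat (matrix_inv G) ** of_real_mat G = (Finite_Cartesian_Product.mat 1 :: 'a::real_algebra_1^_^_)"
  using invertible_matrix_inv[OF assms] by (simp_all flip: of_real_mat_mult add: of_real_mat_1)

lemma gram_form_nondeg:
  fixes u :: "'a::{real_algebra_1,comm_ring_1}^'n"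
  assumes "transpose G = G" "invertible G" and "\<And>w. gram_form G u w = 0"
  shows "u = 0"
proof -
  have "(of_real_mat G *v u)$j = 0" for j
    using assms(3)[of "axis j 1"] by (simp add: gram_form_eq_sum[OF assms(1)] axis_def mult_delta_left)
  then have "of_real_mat G *v u = 0"
    by (simp add: Finite_Cartesian_Product.vec_eq_iff)
  then have "of_real_mat (matrix_inv G) *v (of_real_mat G *v u) = 0"
    by simp
  then show "u = 0"
    by (simp add: matrix_vector_mul_assoc of_real_mat_matrix_inv[OF assms(2)])
qed

lemma the_gram_representation:
  fixes x :: "'a::{real_algebra_1,comm_ring_1}^'n"
  assumes sym: "transpose G = G" and inv: "invertible G"
  shows "(THE M. \<forall>y w. gram_form G (M *v y) w = tensor4 R y x x w)
    = of_real_mat (matrix_inv G) ** curv_matrix R x"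
proof (rule the_equality)
  let ?M = "of_real_mat (matrix_inv G) ** curv_matrix R x :: 'a^'n^'n"
  have repr: "gram_form G (?M *v y) w = tensor4 R y x x w" for y w
  proof -
    have "of_real_mat G *v (?M *v y) = curv_matrix R x *v y"
      by (simp add: matrix_vector_mul_assoc matrix_mul_assoc of_real_mat_matrix_inv[OF inv])
    then have "gram_form G (?M *v y) w = (\<Sum>j\<in>UNIV. w$j * (curv_matrix R x *v y)$j)"
      by (simp add: gram_form_eq_sum[OF sym])
    also have "\<dots> = (\<Sum>j\<in>UNIV. \<Sum>l\<in>UNIV. \<Sum>a\<in>UNIV. \<Sum>b\<in>UNIV. of_real (R l a b j) * y$l * x$a * x$b * w$j)"
      unfolding matrix_vector_mult_def curv_matrix_def
      by (simp add: sum_distrib_left sum_distrib_right mult_ac)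
    also have "\<dots> = tensor4 R y x x w"
      unfolding tensor4_def by (rule sum_rotate4)
    finally show ?thesis .
  qed
  then show "\<forall>y w. gram_form G (?M *v y) w = tensor4 R y x x w"
    by blast
  fix M assume M: "\<forall>y w. gram_form G (M *v y) w = tensor4 R y x x w"
  show "M = ?M"
    unfolding matrix_eq
  proof
    fix y
    have "gram_form G (M *v y - ?M *v y) w = 0" for w
      using M repr by (simp add: gram_form_def algebra_simps sum_subtractf)
    then show "M *v y = ?M *v y"
      using gram_form_nondeg[OF sym inv] by fastforce
  qed
qed

section \<open>Characteristic polynomials of matrices indexed by a finite type\<close>

definition nat_index :: "nat \<Rightarrow> 'n::finite" where
  "nat_index = (SOME h. bij_betw h {0..<CARD('n)} UNIV)"

definition to_mat :: "'a^'n^'n \<Rightarrow> 'a mat" where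
  "to_mat A = Matrix.mat CARD('n) CARD('n) (\<lambda>(i, j). A $ nat_index i $ nat_index j)"

definition to_vec :: "'a^'n \<Rightarrow> 'a Matrix.vec" where
  "to_vec v = Matrix.vec CARD('n) (\<lambda>i. v $ nat_index i)"

definition charpoly :: "'a::comm_ring_1^'n^'n \<Rightarrow> 'a \<Rightarrow> 'a" where
  "charpoly A = poly (char_poly (to_mat A))"

lemma bij_nat_index: "bij_betw (nat_index :: nat \<Rightarrow> 'n::finite) {0..<CARD('n)} UNIV"
proof -
  have "\<exists>h. bij_betw h {0..<CARD('n)} (UNIV :: 'n set)"
    by (rule ex_bij_betw_nat_finite) simp
  then show ?thesis
    unfolding nat_index_def by (rule someI_ex)
qed

lemma to_mat_carrier [simp]: "to_mat (A :: 'a^'n^'n) \<in> carrier_mat CARD('n) CARD('n)"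
  by (simp add: to_mat_def)

lemma dim_to_mat [simp]: "dim_row (to_mat (A :: 'a^'n^'n)) = CARD('n)" "dim_col (to_mat A) = CARD('n)"
  by (simp_all add: to_mat_def)

lemma to_vec_carrier [simp]: "to_vec (v :: 'a^'n) \<in> carrier_vec CARD('n)"
  by (simp add: to_vec_def)

lemma to_vec_inject: "to_vec u = to_vec (v :: 'a^'n) \<longleftrightarrow> u = v"
proof
  assume eq: "to_vec u = to_vec v"
  have "u $ k = v $ k" for k
  proof -
    have "k \<in> nat_index ` {0..<CARD('n)}"
      using bij_nat_index[where 'n = 'n] by (simp add: bij_betw_def)
    then obtain i where "i < CARD('n)" "nat_index i = k"
      by auto
    then show ?thesis
      using arg_cong[OF eq, of "\<lambda>x. vec_index x i"] by (simp add: to_vec_def)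
  qed
  then show "u = v"
    by (simp add: Finite_Cartesian_Product.vec_eq_iff)
qed simp

lemma to_vec_surj: "u \<in> carrier_vec CARD('n) \<Longrightarrow> \<exists>v :: 'a^'n. to_vec v = u"
  using bij_betw_inv_into_right[OF bij_nat_index]
  by (intro exI[of _ "\<chi> k. vec_index u (inv_into {0..<CARD('n)} nat_index k)"])
    (auto simp: to_vec_def bij_betw_inv_into_left[OF bij_nat_index])

lemma to_vec_0: "to_vec (0 :: 'a::zero^'n) = 0\<^sub>v CARD('n)"
  by (auto simp: to_vec_def)

lemma to_vec_smult: "to_vec (c *s v) = c \<cdot>\<^sub>v to_vec (v :: 'a::times^'n)"
  by (auto simp: to_vec_def)

lemma to_vec_mult: "to_mat A *\<^sub>v to_vec v = to_vec (A *v (v :: 'a::comm_semiring_1^'n))"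
proof (rule eq_vecI)
  fix i assume "i < dim_vec (to_vec (A *v v))"
  then have i: "i < CARD('n)"
    by (simp add: to_vec_def)
  have "vec_index (to_mat A *\<^sub>v to_vec v) i = (\<Sum>j = 0..<CARD('n). A $ nat_index i $ nat_index j * v $ nat_index j)"
    using i by (simp add: to_mat_def to_vec_def scalar_prod_def)
  also have "\<dots> = (\<Sum>k\<in>UNIV. A $ nat_index i $ k * v $ k)"
    by (rule sum.reindex_bij_betw[OF bij_nat_index])
  finally show "vec_index (to_mat A *\<^sub>v to_vec v) i = vec_index (to_vec (A *v v)) i"
    using i by (simp add: to_vec_def matrix_vector_mult_def)
qed (simp add: to_mat_def to_vec_def)

lemma to_vec_funpow: "to_vec (((\<lambda>v. A *v v) ^^ N) v) = to_mat A ^\<^sub>m N *\<^sub>v to_vec (v :: 'a::comm_ring_1^'n)"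
proof (induction N arbitrary: v)
  case 0
  then show ?case
    by (simp add: to_mat_def)
next
  case (Suc N)
  have "to_vec (((\<lambda>v. A *v v) ^^ Suc N) v) = to_mat A ^\<^sub>m N *\<^sub>v (to_mat A *\<^sub>v to_vec v)"
    by (simp only: funpow_Suc_right o_def Suc to_vec_mult)
  also have "\<dots> = (to_mat A ^\<^sub>m N * to_mat A) *\<^sub>v to_vec v"
    by (rule assoc_mult_mat_vec[symmetric, of _ "CARD('n)" "CARD('n)" _ "CARD('n)"]) auto
  finally show ?case
    by simp
qed

lemma charpoly_eq_0_iff: "charpoly A c = 0 \<longleftrightarrow> (\<exists>v. v \<noteq> 0 \<and> A *v v = c *s (v :: 'a::field^'n))"
proof -
  have "charpoly A c = 0 \<longleftrightarrow> eigenvalue (to_mat A) c"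
    unfolding charpoly_def by (rule eigenvalue_root_char_poly[symmetric, OF to_mat_carrier])
  also have "\<dots> \<longleftrightarrow> (\<exists>u\<in>carrier_vec CARD('n). u \<noteq> 0\<^sub>v CARD('n) \<and> to_mat A *\<^sub>v u = c \<cdot>\<^sub>v u)"
    by (auto simp: eigenvalue_def eigenvector_def)
  also have "\<dots> \<longleftrightarrow> (\<exists>v. v \<noteq> 0 \<and> A *v v = c *s v)"
  proof
    assume "\<exists>u\<in>carrier_vec CARD('n). u \<noteq> 0\<^sub>v CARD('n) \<and> to_mat A *\<^sub>v u = c \<cdot>\<^sub>v u"
    then obtain u where u: "u \<in> carrier_vec CARD('n)" "u \<noteq> 0\<^sub>v CARD('n)" "to_mat A *\<^sub>v u = c \<cdot>\<^sub>v u"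
      by blast
    obtain v :: "'a^'n" where "to_vec v = u"
      using to_vec_surj[OF u(1)] by blast
    with u have "to_vec v \<noteq> 0\<^sub>v CARD('n)" "to_mat A *\<^sub>v to_vec v = c \<cdot>\<^sub>v to_vec v"
      by simp_all
    then have "v \<noteq> 0" "to_vec (A *v v) = to_vec (c *s v)"
      by (auto simp: to_vec_0 to_vec_mult to_vec_smult)
    then show "\<exists>v. v \<noteq> 0 \<and> A *v v = c *s v"
      unfolding to_vec_inject by blast
  next
    assume "\<exists>v. v \<noteq> 0 \<and> A *v v = c *s v"
    then obtain v where "v \<noteq> 0" "A *v v = c *s v"
      by blast
    then have "to_vec v \<noteq> 0\<^sub>v CARD('n)" "to_mat A *\<^sub>v to_vec v = c \<cdot>\<^sub>v to_vec v"
      by (simp_all add: to_vec_mult to_vec_smult flip: to_vec_0 to_vec_inject)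
    then show "\<exists>u\<in>carrier_vec CARD('n). u \<noteq> 0\<^sub>v CARD('n) \<and> to_mat A *\<^sub>v u = c \<cdot>\<^sub>v u"
      using to_vec_carrier by blast
  qed
  finally show ?thesis .
qed

lemma eigenvalues_eq_charpoly_roots: "eigenvalues M = {c. charpoly (of_real_mat M) c = 0}"
  by (simp add: eigenvalues_def charpoly_eq_0_iff of_real_mat_def)

lemma charpoly_expand:
  "charpoly (A :: 'a::field^'n^'n) \<mu> = (\<Sum>p | p permutes {0..<CARD('n)}. of_int (sign p) *
     (\<Prod>i = 0..<CARD('n). (if p i = i then \<mu> else 0) - A $ nat_index i $ nat_index (p i)))"
proof -
  have "charpoly A \<mu> = Determinant.det (- char_matrix (to_mat A) \<mu>)"
    unfolding charpoly_def by (rule char_poly_matrix[OF to_mat_carrier])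
  also have "\<dots> = (\<Sum>p | p permutes {0..<CARD('n)}. of_int (sign p) *
      (\<Prod>i = 0..<CARD('n). (- char_matrix (to_mat A) \<mu>) $$ (i, p i)))"
    by (rule det_def') simp
  also have "\<dots> = (\<Sum>p | p permutes {0..<CARD('n)}. of_int (sign p) *
      (\<Prod>i = 0..<CARD('n). (if p i = i then \<mu> else 0) - A $ nat_index i $ nat_index (p i)))"
    by (intro sum.cong refl arg_cong[where f = "\<lambda>x. _ * x"] prod.cong)
      (auto simp: char_matrix_def to_mat_def permutes_in_image)
  finally show ?thesis .
qed

lemma charpoly_factorization:
  "\<exists>as. length as = CARD('n) \<and> charpoly (A :: complex^'n^'n) = (\<lambda>\<mu>. \<Prod>a\<leftarrow>as. \<mu> - a)"
proof -
  obtain as where "char_poly (to_mat A) = (\<Prod>a\<leftarrow>as. [:- a, 1:])" "length as = CARD('n)"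
    using char_poly_factorized[OF to_mat_carrier] by blast
  then show ?thesis
    by (intro exI[of _ as]) (simp add: charpoly_def fun_eq_iff poly_prod_list o_def)
qed

lemma charpoly_mat_scale:
  assumes "c \<noteq> 0"
  shows "charpoly (mat_scale c (A :: 'a::field^'n^'n)) \<mu> = c ^ CARD('n) * charpoly A (\<mu> / c)"
proof -
  have factor: "(if p i = i then \<mu> else 0) - c * A $ nat_index i $ nat_index (p i) =
      c * ((if p i = i then \<mu> / c else 0) - A $ nat_index i $ nat_index (p i))" for p i
    using assms by (auto simp: algebra_simps)
  show ?thesis
    unfolding charpoly_expand mat_scale_index factor prod.distrib
    by (simp add: sum_distrib_left mult_ac)
qed

lemma charpoly_mat_scale_eq_monomial:
  assumes "charpoly (A :: 'a::field^'n^'n) = (\<lambda>\<mu>. \<mu> ^ CARD('n))" and "c \<noteq> 0"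
  shows "charpoly (mat_scale c A) = (\<lambda>\<mu>. \<mu> ^ CARD('n))"
proof
  fix \<mu>
  have "charpoly (mat_scale c A) \<mu> = c ^ CARD('n) * (\<mu> / c) ^ CARD('n)"
    using assms by (simp add: charpoly_mat_scale)
  also have "\<dots> = \<mu> ^ CARD('n)"
    using assms(2) by (simp add: power_divide)
  finally show "charpoly (mat_scale c A) \<mu> = \<mu> ^ CARD('n)" .
qed

lemma holomorphic_on_charpoly:
  assumes "\<And>i j. (\<lambda>t. A t $ i $ j) holomorphic_on U"
  shows "(\<lambda>t. charpoly (A t :: complex^'n^'n) \<mu>) holomorphic_on U"
  unfolding charpoly_expand
  by (intro holomorphic_on_sum holomorphic_on_mult holomorphic_on_const holomorphic_on_prod
      holomorphic_on_diff assms)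

lemma jordan_matrix_pow_eq_0:
  fixes n_as :: "(nat \<times> 'a::field) list"
  assumes "\<And>m a. (m, a) \<in> set n_as \<Longrightarrow> a = 0 \<and> m \<le> r"
  shows "jordan_matrix n_as ^\<^sub>m r = 0\<^sub>m (sum_list (map fst n_as)) (sum_list (map fst n_as))"
proof -
  let ?N = "sum_list (map fst n_as)" and ?J = "jordan_matrix n_as ^\<^sub>m r"
  have "elements_mat (jordan_block m a ^\<^sub>m r) \<subseteq> {0}" if "(m, a) \<in> set n_as" for m a
    using assms[OF that] by (auto simp: jordan_block_zero_pow elements_mat_def)
  then have "\<Union> (set (map elements_mat (map (\<lambda>(m, a). jordan_block m a ^\<^sub>m r) n_as))) \<subseteq> {0}"
    by (auto split: prod.splits)
  then have zero: "elements_mat ?J \<subseteq> {0}"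
    using elements_diag_block_mat[of "map (\<lambda>(m, a). jordan_block m a ^\<^sub>m r) n_as"]
    unfolding jordan_matrix_pow by blast
  have J: "?J \<in> carrier_mat ?N ?N"
    by simp
  show ?thesis
  proof (rule eq_matI)
    fix i j assume "i < dim_row (0\<^sub>m ?N ?N :: 'a mat)" "j < dim_col (0\<^sub>m ?N ?N :: 'a mat)"
    then have "?J $$ (i, j) \<in> elements_mat ?J"
      by (intro elements_matI[OF J]) auto
    with zero show "?J $$ (i, j) = 0\<^sub>m ?N ?N $$ (i, j)"
      using \<open>i < _\<close> \<open>j < _\<close> by auto
  qed (use J in auto)
qed

lemma mat_pow_eq_0_if_char_poly_monomial:
  fixes B :: "complex mat"
  assumes B: "B \<in> carrier_mat n n" and cp: "char_poly B = [:0, 1:] ^ n"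
  shows "B ^\<^sub>m n = 0\<^sub>m n n"
proof -
  have "char_poly B = (\<Prod>a\<leftarrow>replicate n 0. [:- a, 1:])"
    by (simp add: cp prod_list_replicate)
  then obtain n_as where jnf: "jordan_nf B n_as"
    using jordan_nf_exists[OF B] by blast
  obtain P Q where PQ: "P \<in> carrier_mat n n" "Q \<in> carrier_mat n n"
    and cp_jnf: "char_poly B = (\<Prod>(m, a)\<leftarrow>n_as. [:- a, 1:] ^ m)"
    and pow: "\<And>r. B ^\<^sub>m r = P * jordan_matrix n_as ^\<^sub>m r * Q"
    using jordan_nf_powE[OF B jnf] by blast
  obtain n' where "{B, jordan_matrix n_as} \<subseteq> carrier_mat n' n'"
    using jnf similar_matD unfolding jordan_nf_def by blast
  then have "dim_row (jordan_matrix n_as) = dim_row B"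
    by (metis carrier_matD(1) insert_subset)
  then have dim: "sum_list (map fst n_as) = n"
    using carrier_matD(1)[OF B] by simp
  have blocks: "a = 0 \<and> m \<le> n" if ma: "(m, a) \<in> set n_as" for m a
  proof
    have "m \<noteq> 0"
      using jnf ma unfolding jordan_nf_def by force
    then have "poly ([:- a, 1:] ^ m) a = 0"
      by (simp add: poly_power)
    then have "0 \<in> set (map (\<lambda>(m, a'). poly ([:- a', 1:] ^ m) a) n_as)"
      using ma by force
    then have "poly (char_poly B) a = 0"
      unfolding cp_jnf poly_prod_list by (simp add: prod_list_zero_iff o_def case_prod_beta)
    then show "a = 0"
      by (simp add: cp poly_power)
    have "m \<in> set (map fst n_as)"
      using ma by force
    then show "m \<le> n"
      using member_le_sum_list[of m "map fst n_as"] dim by simp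
  qed
  have "jordan_matrix n_as ^\<^sub>m n = 0\<^sub>m n n"
    using jordan_matrix_pow_eq_0[of n_as n, OF blocks] unfolding dim .
  then show ?thesis
    using PQ by (simp add: pow)
qed

lemma nilpotent_if_charpoly_monomial:
  assumes "charpoly A = (\<lambda>\<mu>. \<mu> ^ CARD('n))"
  shows "nilpotent (A :: complex^'n^'n)"
proof -
  let ?n = "CARD('n)"
  have "poly (char_poly (to_mat A)) = poly ([:0, 1:] ^ ?n)"
    using assms by (simp add: charpoly_def fun_eq_iff poly_power)
  then have "char_poly (to_mat A) = [:0, 1:] ^ ?n"
    by (simp add: poly_eq_poly_eq_iff)
  then have "to_mat A ^\<^sub>m ?n = 0\<^sub>m ?n ?n"
    by (intro mat_pow_eq_0_if_char_poly_monomial) simp_all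
  moreover have "0\<^sub>m ?n ?n *\<^sub>v to_vec v = 0\<^sub>v ?n" for v :: "complex^'n"
    by (rule eq_vecI) (auto simp: scalar_prod_def to_vec_def intro: sum.neutral)
  ultimately have "to_vec (((\<lambda>v. A *v v) ^^ ?n) v) = to_vec (0 :: complex^'n)" for v
    by (simp add: to_vec_funpow to_vec_0)
  then show ?thesis
    unfolding nilpotent_def to_vec_inject by (intro exI[of _ ?n] ext) simp
qed

section \<open>Holomorphic matrix pencils with rigid spectrum\<close>

lemma limpt_of_real_unit_interval: "0 islimpt (complex_of_real ` {0<..<1})"
  unfolding islimpt_approachable
proof (intro allI impI)
  fix e :: real assume "e > 0"
  then have "complex_of_real (min (e/2) (1/2)) \<in> complex_of_real ` {0<..<1}"
    and "complex_of_real (min (e/2) (1/2)) \<noteq> 0" and "dist (complex_of_real (min (e/2) (1/2))) 0 < e"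
    by (auto simp: dist_norm)
  then show "\<exists>x\<in>complex_of_real ` {0<..<1}. x \<noteq> 0 \<and> dist x 0 < e"
    by blast
qed

lemma entire_eq_if_eq_on_unit_interval:
  assumes "f holomorphic_on UNIV" "g holomorphic_on UNIV"
    and "\<And>s. s \<in> {0<..<1} \<Longrightarrow> f (complex_of_real s) = g (complex_of_real s)"
  shows "f t = g t"
proof -
  have "f t - g t = 0"
    by (rule analytic_continuation[of "\<lambda>t. f t - g t" UNIV "complex_of_real ` {0<..<1}" 0])
      (use assms limpt_of_real_unit_interval in \<open>auto intro: holomorphic_intros\<close>)
  then show ?thesis
    by simp
qed

lemma charpoly_constant_if_roots_constant:
  fixes M :: "'a::topological_space \<Rightarrow> complex^'n^'n"
  assumes "connected U" and cont: "\<And>i j. continuous_on U (\<lambda>t. M t $ i $ j)"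
    and roots: "\<And>t. t \<in> U \<Longrightarrow> {\<mu>. charpoly (M t) \<mu> = 0} = S"
    and "t \<in> U" "t' \<in> U"
  shows "charpoly (M t) = charpoly (M t')"
proof
  fix \<mu>
  have S_roots: "\<exists>as. set as = S \<and> length as = CARD('n) \<and> charpoly (M s) \<mu> = (\<Prod>a\<leftarrow>as. \<mu> - a)"
    if "s \<in> U" for s
  proof -
    obtain as where as: "length as = CARD('n)" "charpoly (M s) = (\<lambda>\<mu>. \<Prod>a\<leftarrow>as. \<mu> - a)"
      using charpoly_factorization by blast
    then have "set as = S"
      using roots[OF that] by (auto simp: prod_list_zero_iff)
    with as show ?thesis
      by auto
  qed
  then have "finite S"
    using \<open>t \<in> U\<close> by force
  have "(\<lambda>s. charpoly (M s) \<mu>) ` U \<subseteq> (\<lambda>as. \<Prod>a\<leftarrow>as. \<mu> - a) ` {as. set as \<subseteq> S \<and> length as = CARD('n)}"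
    using S_roots by fastforce
  then have "finite ((\<lambda>s. charpoly (M s) \<mu>) ` U)"
    by (rule finite_subset) (intro finite_imageI finite_lists_length_eq \<open>finite S\<close>)
  moreover have "continuous_on U (\<lambda>s. charpoly (M s) \<mu>)"
    unfolding charpoly_expand by (intro continuous_intros cont)
  ultimately have "(\<lambda>s. charpoly (M s) \<mu>) constant_on U"
    using continuous_finite_range_constant \<open>connected U\<close> by blast
  then show "charpoly (M t) \<mu> = charpoly (M t') \<mu>"
    using \<open>t \<in> U\<close> \<open>t' \<in> U\<close> by (auto simp: constant_on_def)
qed

lemma prod_list_scale: "(\<Prod>a\<leftarrow>as. q * f a) = q ^ length as * (\<Prod>a\<leftarrow>as. f a :: 'a::comm_monoid_mult)"
  by (induction as) (simp_all add: mult_ac)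

lemma charpoly_rigid_pencil:
  fixes P :: "complex \<Rightarrow> complex^'n^'n" and B :: "complex^'n^'n"
  assumes P: "\<And>i j. (\<lambda>t. P t $ i $ j) holomorphic_on UNIV" and q: "q holomorphic_on UNIV"
    and q_nz: "\<And>t. t \<in> complex_of_real ` {0<..<1} \<Longrightarrow> q t \<noteq> 0"
    and roots: "\<And>t. t \<in> complex_of_real ` {0<..<1} \<Longrightarrow>
      {\<mu>. charpoly (mat_scale (1 / q t) (P t) + B) \<mu> = 0} = S"
  obtains as where "length as = CARD('n)"
    and "\<And>t. t \<in> complex_of_real ` {0<..<1} \<Longrightarrow>
      charpoly (mat_scale (1 / q t) (P t) + B) = (\<lambda>\<mu>. \<Prod>a\<leftarrow>as. \<mu> - a)"
proof -
  let ?U = "complex_of_real ` {0<..<1}"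
  define M where "M t = mat_scale (1 / q t) (P t) + B" for t
  have half: "1/2 \<in> ?U"
    by (rule image_eqI[of _ _ "1/2"]) auto
  obtain as where as: "length as = CARD('n)" "charpoly (M (1/2)) = (\<lambda>\<mu>. \<Prod>a\<leftarrow>as. \<mu> - a)"
    using charpoly_factorization by blast
  have "connected ?U"
    by (intro connected_continuous_image continuous_intros) simp
  moreover have "continuous_on ?U (\<lambda>t. M t $ i $ j)" for i j
  proof -
    have "(\<lambda>t. M t $ i $ j) holomorphic_on {t. q t \<noteq> 0}"
      unfolding M_def by (auto intro!: holomorphic_intros holomorphic_on_subset[OF P] holomorphic_on_subset[OF q])
    then show ?thesis
      by (rule continuous_on_subset[OF holomorphic_on_imp_continuous_on]) (use q_nz in auto)
  qed
  ultimately have const: "charpoly (M t) = charpoly (M (1/2))" if "t \<in> ?U" for t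
    using charpoly_constant_if_roots_constant[of ?U M S] roots half that unfolding M_def by blast
  show ?thesis
  proof (rule that[OF as(1)])
    fix t assume "t \<in> ?U"
    have "charpoly (M t) = (\<lambda>\<mu>. \<Prod>a\<leftarrow>as. \<mu> - a)"
      using const[OF \<open>t \<in> ?U\<close>] as(2) by (rule trans)
    then show "charpoly (mat_scale (1 / q t) (P t) + B) = (\<lambda>\<mu>. \<Prod>a\<leftarrow>as. \<mu> - a)"
      by (simp add: M_def)
  qed
qed

text \<open>On the real segment the characteristic polynomial of \<open>P(t) + q(t) B = q(t) (P(t)/q(t) + B)\<close>
  is \<open>\<Prod>(\<mu> - q(t) a)\<close>, where \<open>\<Prod>(\<mu> - a)\<close> is the constant one of \<open>P(t)/q(t) + B\<close>; by analytic
  continuation this holds everywhere.\<close>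
lemma charpoly_eq_monomial_at_zero_of_pencil:
  fixes P :: "complex \<Rightarrow> complex^'n^'n" and B :: "complex^'n^'n"
  assumes P: "\<And>i j. (\<lambda>t. P t $ i $ j) holomorphic_on UNIV" and q: "q holomorphic_on UNIV"
    and q_nz: "\<And>t. t \<in> complex_of_real ` {0<..<1} \<Longrightarrow> q t \<noteq> 0"
    and roots: "\<And>t. t \<in> complex_of_real ` {0<..<1} \<Longrightarrow>
      {\<mu>. charpoly (mat_scale (1 / q t) (P t) + B) \<mu> = 0} = S"
    and "q t0 = 0"
  shows "charpoly (P t0) = (\<lambda>\<mu>. \<mu> ^ CARD('n))"
proof
  fix \<mu>
  obtain as where as: "length as = CARD('n)"
    and const: "\<And>t. t \<in> complex_of_real ` {0<..<1} \<Longrightarrow>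
      charpoly (mat_scale (1 / q t) (P t) + B) = (\<lambda>\<mu>. \<Prod>a\<leftarrow>as. \<mu> - a)"
    using charpoly_rigid_pencil[OF P q q_nz roots] by blast
  have "charpoly (P t + mat_scale (q t) B) \<mu> = (\<Prod>a\<leftarrow>as. \<mu> - q t * a)" for t
  proof (rule entire_eq_if_eq_on_unit_interval[where f = "\<lambda>t. charpoly (P t + mat_scale (q t) B) \<mu>"])
    show "(\<lambda>t. charpoly (P t + mat_scale (q t) B) \<mu>) holomorphic_on UNIV"
      by (intro holomorphic_on_charpoly) (simp add: holomorphic_intros P q)
    show "(\<lambda>t. \<Prod>a\<leftarrow>as. \<mu> - q t * a) holomorphic_on UNIV"
      by (induction as) (simp_all add: holomorphic_intros q)
  next
    fix s :: real assume "s \<in> {0<..<1}"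
    then have s: "complex_of_real s \<in> complex_of_real ` {0<..<1}"
      by simp
    let ?q = "q (complex_of_real s)"
    have "P (complex_of_real s) + mat_scale ?q B = mat_scale ?q (mat_scale (1 / ?q) (P (complex_of_real s)) + B)"
      using q_nz[OF s] by (simp add: mat_scale_add mat_scale_mat_scale)
    then have "charpoly (P (complex_of_real s) + mat_scale ?q B) \<mu> = ?q ^ length as * (\<Prod>a\<leftarrow>as. \<mu> / ?q - a)"
      using q_nz[OF s] const[OF s] as by (simp add: charpoly_mat_scale)
    also have "\<dots> = (\<Prod>a\<leftarrow>as. \<mu> - ?q * a)"
      using q_nz[OF s] by (simp add: prod_list_scale[symmetric] right_diff_distrib)
    finally show "charpoly (P (complex_of_real s) + mat_scale ?q B) \<mu> = (\<Prod>a\<leftarrow>as. \<mu> - ?q * a)" .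
  qed
  from this[of t0] show "charpoly (P t0) \<mu> = \<mu> ^ CARD('n)"
    using \<open>q t0 = 0\<close> as by (simp add: map_replicate_const prod_list_replicate)
qed

section \<open>Non-degenerate symmetric forms\<close>

lemma rinner_eq_inner: "rinner G u v = u \<bullet> (G *v v)"
  unfolding rinner_def inner_vec_def matrix_vector_mult_def
  by (simp add: sum_distrib_left mult.assoc mult.left_commute)

lemma rinner_add_left: "rinner G (u + v) w = rinner G u w + rinner G v w"
  by (simp add: rinner_eq_inner inner_add_left)

lemma rinner_add_right: "rinner G w (u + v) = rinner G w u + rinner G w v"
  by (simp add: rinner_eq_inner inner_add_right matrix_vector_right_distrib)

lemma rinner_diff_left: "rinner G (u - v) w = rinner G u w - rinner G v w"
  by (simp add: rinner_eq_inner inner_diff_left)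

lemma rinner_diff_right: "rinner G w (u - v) = rinner G w u - rinner G w v"
  by (simp add: rinner_eq_inner inner_diff_right matrix_vector_mult_diff_distrib)

lemma rinner_scaleR_left: "rinner G (c *\<^sub>R u) w = c * rinner G u w"
  by (simp add: rinner_eq_inner)

lemma rinner_scaleR_right: "rinner G w (c *\<^sub>R u) = c * rinner G w u"
  by (simp add: rinner_eq_inner matrix_vector_mult_scaleR)

lemma rinner_zero_left: "rinner G 0 w = 0"
  by (simp add: rinner_eq_inner)

lemma rinner_zero_right: "rinner G w 0 = 0"
  by (simp add: rinner_eq_inner)

lemma rinner_sum_left: "rinner G (\<Sum>i\<in>I. f i) w = (\<Sum>i\<in>I. rinner G (f i) w)"
  by (simp add: rinner_eq_inner inner_sum_left)

lemmas rinner_simps = rinner_add_left rinner_add_right rinner_diff_left rinner_diff_right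
  rinner_scaleR_left rinner_scaleR_right rinner_zero_left rinner_zero_right

lemma exists_inner_dual:
  fixes \<alpha> \<beta> :: "'a::real_inner"
  assumes indep: "\<And>l m. l *\<^sub>R \<alpha> + m *\<^sub>R \<beta> = 0 \<Longrightarrow> l = 0 \<and> m = 0"
  shows "\<exists>c. c \<bullet> \<alpha> = 1 \<and> c \<bullet> \<beta> = 0"
proof -
  define c0 where "c0 = \<alpha> - ((\<alpha> \<bullet> \<beta>) / (\<beta> \<bullet> \<beta>)) *\<^sub>R \<beta>"
  have "\<beta> \<noteq> 0"
    using indep[of 0 1] by auto
  then have c0_\<beta>: "c0 \<bullet> \<beta> = 0"
    by (simp add: c0_def inner_diff_left)
  have "c0 \<noteq> 0"
    using indep[of 1 "- (\<alpha> \<bullet> \<beta>) / (\<beta> \<bullet> \<beta>)"] by (auto simp: c0_def)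
  moreover have "c0 \<bullet> \<alpha> = c0 \<bullet> c0"
    using c0_\<beta> by (simp add: c0_def inner_diff_right)
  ultimately have "c0 \<bullet> \<alpha> \<noteq> 0"
    by simp
  with c0_\<beta> show ?thesis
    by (intro exI[of _ "(1 / (c0 \<bullet> \<alpha>)) *\<^sub>R c0"]) simp
qed

definition orthonormal_family :: "real^'n^'n \<Rightarrow> nat \<Rightarrow> (nat \<Rightarrow> real^'n) \<Rightarrow> bool" where
  "orthonormal_family G j e \<longleftrightarrow>
     (\<forall>i<j. \<forall>l<j. i \<noteq> l \<longrightarrow> rinner G (e i) (e l) = 0) \<and> (\<forall>i<j. \<bar>rinner G (e i) (e i)\<bar> = 1)"

locale nondeg_form =
  fixes G :: "real^'n^'n"
  assumes nondeg_sym: "nondeg_sym_inner G"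
begin

lemma G_symmetric: "transpose G = G"
  using nondeg_sym by (simp add: nondeg_sym_inner_def)

lemma rinner_commute: "rinner G u v = rinner G v u"
  using gram_form_eq_sum[OF G_symmetric, of u v]
  by (simp add: rinner_eq_gram_form[symmetric] rinner_eq_inner inner_vec_def)

lemma rinner_nondeg: "(\<And>v. rinner G u v = 0) \<Longrightarrow> u = 0"
  using nondeg_sym by (auto simp: nondeg_sym_inner_def)

lemma G_invertible: "invertible G"
proof -
  have "u = 0" if "G *v u = 0" for u
    by (rule rinner_nondeg) (metis rinner_commute rinner_eq_inner that inner_zero_right)
  then obtain B where "B ** G = Finite_Cartesian_Product.mat 1"
    using matrix_left_invertible_ker by blast
  then show ?thesis
    unfolding invertible_def using matrix_left_right_inverse by blast
qed

lemma jacobi_eq: "jacobi G R x = matrix_inv G ** curv_matrix R x"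
  using the_gram_representation[OF G_symmetric G_invertible, of R x]
  by (simp add: jacobi_def rinner_eq_gram_form rtens_eq_tensor4)

lemma cjacobi_eq: "cjacobi G R z = of_real_mat (matrix_inv G) ** curv_matrix R z"
  using the_gram_representation[OF G_symmetric G_invertible, of R z]
  by (simp add: cjacobi_def cinner_eq_gram_form ctens_eq_tensor4)

lemma of_real_mat_jacobi: "of_real_mat (jacobi G R x) = cjacobi G R (of_real_vec x)"
  by (simp add: jacobi_eq cjacobi_eq of_real_mat_mult of_real_mat_curv_matrix)

lemma cjacobi_scale: "cjacobi G R (c *s z) = mat_scale (c^2) (cjacobi G R z)"
  by (simp add: cjacobi_eq curv_matrix_scale mat_scale_matrix_mult)

lemma holomorphic_on_cjacobi:
  assumes "\<And>i. (\<lambda>t. z t $ i) holomorphic_on U"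
  shows "(\<lambda>t. cjacobi G R (z t) $ i $ j) holomorphic_on U"
  unfolding cjacobi_eq matrix_matrix_mult_def curv_matrix_def
  by (simp add: holomorphic_intros assms)

lemma of_real_mat_higher_jacobi:
  "of_real_mat (higher_jacobi G R k e)
     = (\<Sum>i<k. mat_scale (of_real (rinner G (e i) (e i))) (cjacobi G R (of_real_vec (e i))))"
  by (simp add: higher_jacobi_def of_real_mat_sum_scaleR of_real_mat_jacobi)

lemma charpoly_cjacobi_scale:
  assumes "charpoly (cjacobi G R z) = (\<lambda>\<mu>. \<mu> ^ CARD('n))" and "c \<noteq> 0"
  shows "charpoly (cjacobi G R (c *s z)) = (\<lambda>\<mu>. \<mu> ^ CARD('n))"
  using charpoly_mat_scale_eq_monomial[OF assms(1)] assms(2) by (simp add: cjacobi_scale)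

lemma cinner_complexified:
  "cinner G (of_real_vec a + \<i> *s of_real_vec b) (of_real_vec a + \<i> *s of_real_vec b) =
    of_real (rinner G a a - rinner G b b) + \<i> * of_real (2 * rinner G a b)"
proof -
  have "cinner G (of_real_vec a + \<i> *s of_real_vec b) (of_real_vec a + \<i> *s of_real_vec b) =
     (\<Sum>i\<in>UNIV. \<Sum>j\<in>UNIV. of_real (G$i$j * a$i * a$j) - of_real (G$i$j * b$i * b$j)
        + \<i> * (of_real (G$i$j * a$i * b$j) + of_real (G$i$j * b$i * a$j)))"
    unfolding cinner_def of_real_vec_def by (intro sum.cong refl) (simp add: algebra_simps)
  also have "\<dots> = of_real (rinner G a a) - of_real (rinner G b b)
      + \<i> * (of_real (rinner G a b) + of_real (rinner G b a))"
    unfolding rinner_def by (simp add: sum.distrib sum_subtractf sum_distrib_left distrib_left)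
  finally show ?thesis
    by (simp add: rinner_commute[of b a] algebra_simps)
qed

lemma exists_rinner_dual:
  assumes "\<And>l m. l *\<^sub>R a + m *\<^sub>R b = 0 \<Longrightarrow> l = 0 \<and> m = 0"
  shows "\<exists>c. rinner G c a = 1 \<and> rinner G c b = 0"
proof -
  have "l = 0 \<and> m = 0" if "l *\<^sub>R (G *v a) + m *\<^sub>R (G *v b) = 0" for l m
  proof (rule assms)
    have "G *v (l *\<^sub>R a + m *\<^sub>R b) = 0"
      using that by (simp add: matrix_vector_right_distrib matrix_vector_mult_scaleR)
    then show "l *\<^sub>R a + m *\<^sub>R b = 0"
      using inj_matrix_vector_mult[OF G_invertible] by (metis injD matrix_vector_mult_0_right)
  qed
  then show ?thesis
    using exists_inner_dual[of "G *v a" "G *v b"] by (simp add: rinner_eq_inner)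
qed

lemma exists_null_partner:
  assumes "rinner G v v = 0" and "v \<noteq> 0"
  shows "\<exists>w. rinner G w w = 0 \<and> rinner G v w = 1"
proof -
  obtain u where u: "rinner G v u \<noteq> 0"
    using rinner_nondeg assms(2) by blast
  define c where "c = (1 / rinner G v u) *\<^sub>R u"
  have "rinner G v c = 1"
    using u by (simp add: c_def rinner_scaleR_right)
  then show ?thesis
    using assms(1) rinner_commute[of c v]
    by (intro exI[of _ "c - (rinner G c c / 2) *\<^sub>R v"]) (simp add: rinner_simps algebra_simps)
qed

lemma rinner_normalized:
  assumes "rinner G w w \<noteq> 0"
  shows "rinner G ((1 / sqrt \<bar>rinner G w w\<bar>) *\<^sub>R w) ((1 / sqrt \<bar>rinner G w w\<bar>) *\<^sub>R w) = sgn (rinner G w w)"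
  using assms by (simp add: rinner_scaleR_left rinner_scaleR_right sgn_if real_sqrt_mult[symmetric])


lemma orthonormal_family_square:
  assumes "orthonormal_family G j e" and "i < j"
  shows "rinner G (e i) (e i) * rinner G (e i) (e i) = 1"
  using assms abs_mult_self_eq[of "rinner G (e i) (e i)"] by (simp add: orthonormal_family_def)

lemma orthonormal_family_coeff:
  assumes e: "orthonormal_family G j e" and "l < j"
  shows "rinner G (\<Sum>i<j. c i *\<^sub>R e i) (e l) = c l * rinner G (e l) (e l)"
proof -
  have "rinner G (\<Sum>i<j. c i *\<^sub>R e i) (e l) = (\<Sum>i<j. if i = l then c l * rinner G (e l) (e l) else 0)"
    unfolding rinner_sum_left rinner_scaleR_left
    using e \<open>l < j\<close> by (intro sum.cong refl) (auto simp: orthonormal_family_def)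
  then show ?thesis
    using \<open>l < j\<close> by simp
qed

lemma orthonormal_family_inj:
  assumes "orthonormal_family G j e"
  shows "inj_on e {..<j}"
  using assms unfolding orthonormal_family_def by (intro inj_onI) force

lemma orthonormal_family_span:
  assumes e: "orthonormal_family G j e" and "v \<in> span (e ` {..<j})"
  obtains c where "v = (\<Sum>i<j. c i *\<^sub>R e i)"
proof -
  obtain u where "v = (\<Sum>w\<in>e ` {..<j}. u w *\<^sub>R w)"
    using assms(2) span_finite[of "e ` {..<j}"] by auto
  also have "\<dots> = (\<Sum>i<j. u (e i) *\<^sub>R e i)"
    by (simp add: sum.reindex[OF orthonormal_family_inj[OF e]])
  finally show ?thesis
    by (rule that)
qed

lemma orthonormal_family_independent:
  assumes e: "orthonormal_family G j e"
  shows "independent (e ` {..<j})"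
  unfolding independent_explicit
proof (intro conjI allI impI ballI)
  fix c v assume zero: "(\<Sum>v\<in>e ` {..<j}. c v *\<^sub>R v) = 0" and "v \<in> e ` {..<j}"
  then obtain l where l: "l < j" "v = e l"
    by auto
  have "(\<Sum>i<j. c (e i) *\<^sub>R e i) = 0"
    using zero by (simp add: sum.reindex[OF orthonormal_family_inj[OF e]])
  then have "c (e l) * rinner G (e l) (e l) = 0"
    using orthonormal_family_coeff[OF e l(1), of "\<lambda>i. c (e i)"] by (simp add: rinner_zero_left)
  then show "c v = 0"
    using e l by (auto simp: orthonormal_family_def)
qed simp

lemma orthonormal_family_basis:
  assumes e: "orthonormal_family G j e"
  shows "nondeg_subspace G (span (e ` {..<j}))" "dim (span (e ` {..<j})) = j"
    "orthonormal_basis G (span (e ` {..<j})) j e"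
proof -
  show "nondeg_subspace G (span (e ` {..<j}))"
    unfolding nondeg_subspace_def
  proof (intro conjI ballI impI subspace_span)
    fix u assume "u \<in> span (e ` {..<j})" and orth: "\<forall>v\<in>span (e ` {..<j}). rinner G u v = 0"
    then obtain c where c: "u = (\<Sum>i<j. c i *\<^sub>R e i)"
      using orthonormal_family_span[OF e] by blast
    have "c l = 0" if "l < j" for l
    proof -
      have "rinner G u (e l) = 0"
        using orth that by (simp add: span_base)
      then have "c l * rinner G (e l) (e l) = 0"
        using orthonormal_family_coeff[OF e that] c by simp
      then show "c l = 0"
        using e that by (auto simp: orthonormal_family_def)
    qed
    then show "u = 0"
      by (simp add: c)
  qed
  show "dim (span (e ` {..<j})) = j"
    using dim_eq_card_independent[OF orthonormal_family_independent[OF e]]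
      card_image[OF orthonormal_family_inj[OF e]]
    by (simp add: dim_span)
  show "orthonormal_basis G (span (e ` {..<j})) j e"
    using e unfolding orthonormal_basis_def orthonormal_family_def by (auto intro: span_base)
qed

lemma orthonormal_family_residual_orth:
  assumes e: "orthonormal_family G j e" and "l < j"
  shows "rinner G (z - (\<Sum>i<j. (rinner G (e i) (e i) * rinner G z (e i)) *\<^sub>R e i)) (e l) = 0"
  using orthonormal_family_square[OF assms]
  by (simp add: rinner_diff_left orthonormal_family_coeff[OF assms] algebra_simps)

lemma orthogonal_complement_nondeg:
  assumes e: "orthonormal_family G j e" and u: "\<forall>l<j. rinner G u (e l) = 0"
    and orth: "\<And>w. \<forall>l<j. rinner G w (e l) = 0 \<Longrightarrow> rinner G u w = 0"
  shows "u = 0"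
proof (rule rinner_nondeg)
  fix z
  let ?p = "\<Sum>i<j. (rinner G (e i) (e i) * rinner G z (e i)) *\<^sub>R e i"
  have "rinner G u (z - ?p) = 0"
    using orthonormal_family_residual_orth[OF e] by (intro orth) blast
  moreover have "rinner G (e l) u = 0" if "l < j" for l
    using u that rinner_commute[of u "e l"] by simp
  then have "rinner G ?p u = 0"
    by (simp add: rinner_sum_left rinner_scaleR_left)
  ultimately show "rinner G u z = 0"
    using rinner_commute[of ?p u] by (simp add: rinner_diff_right)
qed

text \<open>Otherwise the orthogonal complement of the family would be totally null, hence zero by
  polarization and \<open>orthogonal_complement_nondeg\<close>, and the family would span the whole space.\<close>
lemma exists_nonnull_orthogonal:
  assumes e: "orthonormal_family G j e" and "j < CARD('n)"
  shows "\<exists>u. (\<forall>l<j. rinner G u (e l) = 0) \<and> rinner G u u \<noteq> 0"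
proof (rule ccontr)
  assume "\<not> ?thesis"
  then have null: "rinner G u u = 0" if "\<forall>l<j. rinner G u (e l) = 0" for u
    using that by blast
  have zero: "u = 0" if u: "\<forall>l<j. rinner G u (e l) = 0" for u
  proof (rule orthogonal_complement_nondeg[OF e u])
    fix w assume w: "\<forall>l<j. rinner G w (e l) = 0"
    then have "rinner G (u + w) (u + w) = 0"
      using u by (intro null) (simp add: rinner_add_left)
    then show "rinner G u w = 0"
      using null[OF u] null[OF w] rinner_commute[of w u] by (simp add: rinner_add_left rinner_add_right)
  qed
  have "z \<in> span (e ` {..<j})" for z
  proof -
    have "z - (\<Sum>i<j. (rinner G (e i) (e i) * rinner G z (e i)) *\<^sub>R e i) = 0"
      using zero orthonormal_family_residual_orth[OF e] by blast
    then have "z = (\<Sum>i<j. (rinner G (e i) (e i) * rinner G z (e i)) *\<^sub>R e i)"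
      by simp
    also have "\<dots> \<in> span (e ` {..<j})"
      by (intro span_sum span_scale span_base) auto
    finally show ?thesis .
  qed
  then have "CARD('n) \<le> card (e ` {..<j})"
    using dim_le_card[of UNIV "e ` {..<j}"] by (auto simp: dim_UNIV)
  also have "\<dots> \<le> j"
    using card_image_le[of "{..<j}" e] by simp
  finally show False
    using \<open>j < CARD('n)\<close> by simp
qed

lemma orthonormal_family_extend:
  assumes e: "orthonormal_family G j e" and "j < CARD('n)"
  shows "\<exists>v. orthonormal_family G (Suc j) (e(j := v))"
proof -
  obtain u where u: "\<forall>l<j. rinner G u (e l) = 0" "rinner G u u \<noteq> 0"
    using exists_nonnull_orthogonal[OF assms] by blast
  define v where "v = (1 / sqrt \<bar>rinner G u u\<bar>) *\<^sub>R u"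
  have "\<bar>rinner G v v\<bar> = 1"
    using rinner_normalized[OF u(2)] u(2) by (simp add: v_def abs_sgn)
  moreover have "rinner G v (e l) = 0" if "l < j" for l
    using u(1) that by (simp add: v_def rinner_scaleR_left)
  moreover have "rinner G (e l) v = 0" if "l < j" for l
    using calculation(2)[OF that] rinner_commute[of v "e l"] by simp
  ultimately show ?thesis
    using e unfolding orthonormal_family_def by (intro exI[of _ v]) (auto simp: less_Suc_eq)
qed

lemma orthonormal_family_extend_to:
  assumes e: "orthonormal_family G j e" and "j \<le> m" "m \<le> CARD('n)"
  shows "\<exists>e'. orthonormal_family G m e' \<and> (\<forall>i<j. e' i = e i)"
  using assms(2,3)
proof (induction m)
  case 0
  then show ?case
    using e by auto
next
  case (Suc m)
  show ?case
  proof (cases "j = Suc m")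
    case True
    then show ?thesis
      using e by blast
  next
    case False
    then obtain e' where e': "orthonormal_family G m e'" "\<forall>i<j. e' i = e i"
      using Suc by auto
    obtain v where "orthonormal_family G (Suc m) (e'(m := v))"
      using orthonormal_family_extend[OF e'(1)] Suc.prems by auto
    moreover have "\<forall>i<j. (e'(m := v)) i = e i"
      using e'(2) False Suc.prems by auto
    ultimately show ?thesis
      by blast
  qed
qed

lemma orthonormal_pair_extend:
  assumes "rinner G u v = 0" "\<bar>rinner G u u\<bar> = 1" "\<bar>rinner G v v\<bar> = 1" and "2 \<le> m" "m \<le> CARD('n)"
  obtains F where "orthonormal_family G m F" "F 0 = u" "F (Suc 0) = v"
proof -
  have "orthonormal_family G 2 (\<lambda>i. if i = 0 then u else v)"
    using assms(1-3) rinner_commute[of v u] by (auto simp: orthonormal_family_def less_2_cases_iff)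
  then obtain F where "orthonormal_family G m F" "\<forall>i<2. F i = (if i = 0 then u else v)"
    using orthonormal_family_extend_to assms(4,5) by blast
  then show ?thesis
    using that by auto
qed

lemma rinner_orthogonal_pencil:
  assumes "rinner G u v = 0"
  shows "rinner G (u + s *\<^sub>R v) (u + s *\<^sub>R v) = rinner G u u + s\<^sup>2 * rinner G v v"
  using assms rinner_commute[of v u] by (simp add: rinner_simps power2_eq_square)

lemma rinner_orthonormal_pencil_nonzero:
  assumes "rinner G u v = 0" "\<bar>rinner G u u\<bar> = 1" "\<bar>rinner G v v\<bar> = 1" and "s \<in> {0<..<1}"
  shows "rinner G (u + s *\<^sub>R v) (u + s *\<^sub>R v) \<noteq> 0"
proof -
  have "s\<^sup>2 < 1"
    using assms(4) mult_strict_mono[of s 1 s 1] by (simp add: power2_eq_square)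
  then have "\<bar>s\<^sup>2 * rinner G v v\<bar> < 1"
    using assms(3) by (simp add: abs_mult)
  then show ?thesis
    using assms(2) by (simp add: rinner_orthogonal_pencil[OF assms(1)])
qed

lemma dependent_orthogonal_equal_norms_null:
  assumes "l *\<^sub>R a + m *\<^sub>R b = 0" "l \<noteq> 0 \<or> m \<noteq> 0"
    and "rinner G a a = rinner G b b" "rinner G a b = 0"
  shows "rinner G a a = 0"
proof -
  have "rinner G (l *\<^sub>R a + m *\<^sub>R b) a = 0" "rinner G (l *\<^sub>R a + m *\<^sub>R b) b = 0"
    using assms(1) by (simp_all add: rinner_zero_left)
  then have "l * rinner G a a = 0" "m * rinner G b b = 0"
    using assms(4) rinner_commute[of b a] by (simp_all add: rinner_simps)
  then show ?thesis
    using assms(2,3) by auto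
qed

lemma orthonormal_family_replace_first_two:
  assumes F: "orthonormal_family G (Suc k) F"
    and w: "\<And>l. 2 \<le> l \<Longrightarrow> l \<le> k \<Longrightarrow> rinner G w (F l) = 0" and "rinner G w w \<noteq> 0"
  shows "orthonormal_family G k (\<lambda>i. if i = 0 then (1 / sqrt \<bar>rinner G w w\<bar>) *\<^sub>R w else F (Suc i))"
proof -
  let ?w = "(1 / sqrt \<bar>rinner G w w\<bar>) *\<^sub>R w"
  have "\<bar>rinner G ?w ?w\<bar> = 1"
    using rinner_normalized[OF \<open>rinner G w w \<noteq> 0\<close>] \<open>rinner G w w \<noteq> 0\<close> by (simp add: abs_sgn)
  moreover have "rinner G ?w (F (Suc l)) = 0" if "0 < l" "l < k" for l
    using w[of "Suc l"] that by (simp add: rinner_scaleR_left)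
  moreover have "rinner G (F (Suc l)) ?w = 0" if "0 < l" "l < k" for l
    using calculation(2)[OF that] rinner_commute[of ?w "F (Suc l)"] by simp
  ultimately show ?thesis
    using F unfolding orthonormal_family_def by auto
qed

end

section \<open>Null vectors of \<open>k\<close> Osserman tensors\<close>

lemma complexified_dependent_pair:
  assumes "l *\<^sub>R a + m *\<^sub>R b = 0" and "l \<noteq> 0 \<or> m \<noteq> 0"
  obtains c v where "v = a \<or> v = b" and "of_real_vec a + \<i> *s of_real_vec b = c *s (of_real_vec v :: complex^'n)"
proof (cases "m = 0")
  case True
  then have "a = 0"
    using assms by simp
  then show ?thesis
    using that[of b \<i>] by simp
next
  case False
  have "m *\<^sub>R b = - (l *\<^sub>R a)"
    using assms(1) by (simp add: eq_neg_iff_add_eq_0 add.commute)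
  have "b = (1 / m) *\<^sub>R (m *\<^sub>R b)"
    using False by simp
  also have "\<dots> = (- l / m) *\<^sub>R a"
    using \<open>m *\<^sub>R b = - (l *\<^sub>R a)\<close> by simp
  finally have "b = (- l / m) *\<^sub>R a" .
  then have "of_real_vec a + \<i> *s of_real_vec b = (1 + \<i> * of_real (- l / m)) *s (of_real_vec a :: complex^'n)"
    by (simp add: of_real_vec_def Finite_Cartesian_Product.vec_eq_iff algebra_simps)
  then show ?thesis
    using that by blast
qed

locale osserman_form = nondeg_form G for G :: "real^'n^'n" +
  fixes R :: "'n \<Rightarrow> 'n \<Rightarrow> 'n \<Rightarrow> 'n \<Rightarrow> real" and k :: nat and S :: "complex set"
  assumes k_pos: "1 \<le> k" and k_less: "k < CARD('n)"
    and spectrum: "\<And>\<sigma> e. nondeg_subspace G \<sigma> \<Longrightarrow> dim \<sigma> = k \<Longrightarrow> orthonormal_basis G \<sigma> k e \<Longrightarrow>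
      eigenvalues (higher_jacobi G R k e) = S"
begin

lemma charpoly_roots_higher_jacobi:
  assumes "orthonormal_family G k e"
  shows "{\<mu>. charpoly (of_real_mat (higher_jacobi G R k e)) \<mu> = 0} = S"
  using spectrum[OF orthonormal_family_basis[OF assms]] by (simp add: eigenvalues_eq_charpoly_roots)

lemma higher_jacobi_replaced_pair:
  assumes F: "orthonormal_family G (Suc k) F" and "rinner G w w \<noteq> 0"
  defines "e \<equiv> \<lambda>i. if i = 0 then (1 / sqrt \<bar>rinner G w w\<bar>) *\<^sub>R w else F (Suc i)"
  shows "of_real_mat (higher_jacobi G R k e)
    = mat_scale (1 / of_real (rinner G w w)) (cjacobi G R (of_real_vec w))
      + (\<Sum>i\<in>{1..<k}. mat_scale (of_real (rinner G (F (Suc i)) (F (Suc i)))) (cjacobi G R (of_real_vec (F (Suc i)))))"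
proof -
  let ?r = "rinner G w w"
  let ?c = "1 / sqrt \<bar>?r\<bar>"
  have "(complex_of_real (sqrt \<bar>?r\<bar>))\<^sup>2 = of_real \<bar>?r\<bar>"
    by (simp flip: of_real_power)
  then have "complex_of_real (sgn ?r) * (1 / complex_of_real (sqrt \<bar>?r\<bar>))\<^sup>2 = 1 / of_real ?r"
    using \<open>?r \<noteq> 0\<close> by (simp add: power_divide sgn_if)
  then have first: "mat_scale (of_real (rinner G (?c *\<^sub>R w) (?c *\<^sub>R w))) (cjacobi G R (of_real_vec (?c *\<^sub>R w)))
      = mat_scale (1 / of_real ?r) (cjacobi G R (of_real_vec w))"
    using rinner_normalized[OF \<open>?r \<noteq> 0\<close>]
    by (simp add: of_real_vec_scaleR cjacobi_scale mat_scale_mat_scale)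
  have "{..<k} = insert 0 {1..<k}"
    using k_pos by auto
  then show ?thesis
    unfolding of_real_mat_higher_jacobi by (simp add: first e_def)
qed

lemma charpoly_roots_replaced_pair:
  assumes F: "orthonormal_family G (Suc k) F"
    and w: "\<And>l. 2 \<le> l \<Longrightarrow> l \<le> k \<Longrightarrow> rinner G w (F l) = 0" and "rinner G w w \<noteq> 0"
  shows "{\<mu>. charpoly (mat_scale (1 / of_real (rinner G w w)) (cjacobi G R (of_real_vec w))
      + (\<Sum>i\<in>{1..<k}. mat_scale (of_real (rinner G (F (Suc i)) (F (Suc i))))
          (cjacobi G R (of_real_vec (F (Suc i)))))) \<mu> = 0} = S"
  using charpoly_roots_higher_jacobi[OF orthonormal_family_replace_first_two[OF assms]]
  by (simp add: higher_jacobi_replaced_pair[OF F \<open>rinner G w w \<noteq> 0\<close>])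

lemma charpoly_cjacobi_orthonormal_pencil:
  assumes uv: "rinner G u v = 0" and u: "\<bar>rinner G u u\<bar> = 1" and v: "\<bar>rinner G v v\<bar> = 1"
    and t0: "of_real (rinner G u u) + t0\<^sup>2 * of_real (rinner G v v) = 0"
  shows "charpoly (cjacobi G R (of_real_vec u + t0 *s of_real_vec v)) = (\<lambda>\<mu>. \<mu> ^ CARD('n))"
proof -
  obtain F where F: "orthonormal_family G (Suc k) F" and F01: "F 0 = u" "F (Suc 0) = v"
    using orthonormal_pair_extend[OF uv u v, of "Suc k"] k_pos k_less by auto
  define q where "q t = of_real (rinner G u u) + t\<^sup>2 * of_real (rinner G v v)" for t :: complex
  have q_real: "q (of_real s) = of_real (rinner G (u + s *\<^sub>R v) (u + s *\<^sub>R v))" for s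
    by (simp add: q_def rinner_orthogonal_pencil[OF uv])
  note nonnull = rinner_orthonormal_pencil_nonzero[OF uv u v]
  have orth: "rinner G (u + s *\<^sub>R v) (F l) = 0" if "2 \<le> l" "l \<le> k" for s l
  proof -
    have "rinner G (F 0) (F l) = 0" "rinner G (F (Suc 0)) (F l) = 0"
      using F that unfolding orthonormal_family_def by auto
    then show ?thesis
      by (simp add: F01 rinner_add_left rinner_scaleR_left)
  qed
  show ?thesis
  proof (rule charpoly_eq_monomial_at_zero_of_pencil)
    show "(\<lambda>t. cjacobi G R (of_real_vec u + t *s of_real_vec v) $ i $ j) holomorphic_on UNIV" for i j
      by (rule holomorphic_on_cjacobi) (simp add: holomorphic_intros)
    show "q holomorphic_on UNIV"
      unfolding q_def by (simp add: holomorphic_intros)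
    show "q t0 = 0"
      using t0 by (simp add: q_def)
    fix t assume "t \<in> complex_of_real ` {0<..<1}"
    then obtain s where s: "s \<in> {0<..<1}" "t = of_real s"
      by blast
    then show "q t \<noteq> 0"
      using nonnull q_real by simp
    have "of_real_vec u + t *s of_real_vec v = of_real_vec (u + s *\<^sub>R v)"
      by (simp add: s of_real_vec_add of_real_vec_scaleR)
    then show "{\<mu>. charpoly (mat_scale (1 / q t) (cjacobi G R (of_real_vec u + t *s of_real_vec v))
        + (\<Sum>i\<in>{1..<k}. mat_scale (of_real (rinner G (F (Suc i)) (F (Suc i))))
          (cjacobi G R (of_real_vec (F (Suc i)))))) \<mu> = 0} = S"
      using charpoly_roots_replaced_pair[OF F orth nonnull[OF s(1)]] by (simp add: q_real s)
  qed
qed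


lemma charpoly_cjacobi_orthogonal_equal_norms:
  assumes ab: "rinner G a a = rinner G b b" "rinner G a b = 0" and "rinner G a a \<noteq> 0"
  shows "charpoly (cjacobi G R (of_real_vec a + \<i> *s of_real_vec b)) = (\<lambda>\<mu>. \<mu> ^ CARD('n))"
proof -
  let ?r = "rinner G a a"
  let ?c = "1 / sqrt \<bar>?r\<bar>"
  have "rinner G (?c *\<^sub>R a) (?c *\<^sub>R a) = sgn ?r" "rinner G (?c *\<^sub>R b) (?c *\<^sub>R b) = sgn ?r"
    using rinner_normalized[of a] rinner_normalized[of b] ab \<open>?r \<noteq> 0\<close> by simp_all
  moreover have "rinner G (?c *\<^sub>R a) (?c *\<^sub>R b) = 0"
    using ab by (simp add: rinner_scaleR_left rinner_scaleR_right)
  ultimately have "charpoly (cjacobi G R (of_real_vec (?c *\<^sub>R a) + \<i> *s of_real_vec (?c *\<^sub>R b)))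
      = (\<lambda>\<mu>. \<mu> ^ CARD('n))"
    using \<open>?r \<noteq> 0\<close> by (intro charpoly_cjacobi_orthonormal_pencil) (simp_all add: abs_sgn)
  then have "charpoly (cjacobi G R (of_real (sqrt \<bar>?r\<bar>) *s
      (of_real_vec (?c *\<^sub>R a) + \<i> *s of_real_vec (?c *\<^sub>R b)))) = (\<lambda>\<mu>. \<mu> ^ CARD('n))"
    by (rule charpoly_cjacobi_scale) (simp add: \<open>?r \<noteq> 0\<close>)
  moreover have "of_real_vec a + \<i> *s of_real_vec b
      = of_real (sqrt \<bar>?r\<bar>) *s (of_real_vec (?c *\<^sub>R a) + \<i> *s of_real_vec (?c *\<^sub>R b))"
    using \<open>?r \<noteq> 0\<close>
    by (simp add: of_real_vec_scaleR Finite_Cartesian_Product.vec_eq_iff algebra_simps flip: of_real_mult)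
  ultimately show ?thesis
    by simp
qed

lemma charpoly_cjacobi_real_null:
  assumes "rinner G v v = 0" and "v \<noteq> 0"
  shows "charpoly (cjacobi G R (of_real_vec v)) = (\<lambda>\<mu>. \<mu> ^ CARD('n))"
proof -
  obtain w where w: "rinner G w w = 0" "rinner G v w = 1"
    using exists_null_partner[OF assms] by blast
  let ?f0 = "v + (1/2) *\<^sub>R w" and ?f1 = "v - (1/2) *\<^sub>R w"
  have "rinner G ?f0 ?f0 = 1" "rinner G ?f1 ?f1 = -1" "rinner G ?f0 ?f1 = 0"
    using assms(1) w rinner_commute[of w v] by (simp_all add: rinner_simps)
  then have "charpoly (cjacobi G R (of_real_vec ?f0 + 1 *s of_real_vec ?f1)) = (\<lambda>\<mu>. \<mu> ^ CARD('n))"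
    by (intro charpoly_cjacobi_orthonormal_pencil) simp_all
  then have "charpoly (cjacobi G R ((1/2) *s (of_real_vec ?f0 + 1 *s of_real_vec ?f1))) = (\<lambda>\<mu>. \<mu> ^ CARD('n))"
    by (rule charpoly_cjacobi_scale) simp
  moreover have "of_real_vec v = (1/2 :: complex) *s (of_real_vec ?f0 + 1 *s of_real_vec ?f1)"
    by (simp add: of_real_vec_def Finite_Cartesian_Product.vec_eq_iff algebra_simps)
  ultimately show ?thesis
    by (simp only:)
qed

text \<open>A totally null pair is the limit \<open>s \<rightarrow> 0\<close> of the orthogonal pairs \<open>a + s c', b + s d'\<close>
  of equal norm \<open>2s\<close>, where \<open>c', d'\<close> is a null frame dual to \<open>a, b\<close>.\<close>
lemma charpoly_cjacobi_totally_null_pair: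
  assumes aa: "rinner G a a = 0" and bb: "rinner G b b = 0" and ab: "rinner G a b = 0"
    and indep: "\<And>l m. l *\<^sub>R a + m *\<^sub>R b = 0 \<Longrightarrow> l = 0 \<and> m = 0"
  shows "charpoly (cjacobi G R (of_real_vec a + \<i> *s of_real_vec b)) = (\<lambda>\<mu>. \<mu> ^ CARD('n))"
proof
  fix \<mu>
  obtain c where c: "rinner G c a = 1" "rinner G c b = 0"
    using exists_rinner_dual[OF indep] by blast
  obtain d where d: "rinner G d b = 1" "rinner G d a = 0"
    using exists_rinner_dual[of b a] indep by (metis add.commute)
  define c' where "c' = c - (rinner G c c / 2) *\<^sub>R a - rinner G c d *\<^sub>R b"
  define d' where "d' = d - (rinner G d d / 2) *\<^sub>R b"
  have sym: "rinner G a c = 1" "rinner G b c = 0" "rinner G b d = 1" "rinner G a d = 0"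
    "rinner G b a = 0" "rinner G d c = rinner G c d"
    using c d ab rinner_commute by metis+
  have frame: "rinner G a c' = 1" "rinner G c' a = 1" "rinner G b c' = 0" "rinner G c' b = 0"
    "rinner G a d' = 0" "rinner G d' a = 0" "rinner G b d' = 1" "rinner G d' b = 1"
    "rinner G c' c' = 0" "rinner G d' d' = 0" "rinner G c' d' = 0"
    unfolding c'_def d'_def using aa bb ab c d sym by (simp_all add: rinner_simps algebra_simps)
  define x where "x = of_real_vec a + \<i> *s of_real_vec b"
  define y where "y = of_real_vec c' + \<i> *s of_real_vec d'"
  have "charpoly (cjacobi G R (x + t *s y)) \<mu> = \<mu> ^ CARD('n)" for t
  proof (rule entire_eq_if_eq_on_unit_interval[where f = "\<lambda>t. charpoly (cjacobi G R (x + t *s y)) \<mu>"])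
    show "(\<lambda>t. charpoly (cjacobi G R (x + t *s y)) \<mu>) holomorphic_on UNIV"
      by (intro holomorphic_on_charpoly holomorphic_on_cjacobi) (simp add: holomorphic_intros)
    fix s :: real assume "s \<in> {0<..<1}"
    have "rinner G (a + s *\<^sub>R c') (a + s *\<^sub>R c') = 2 * s" "rinner G (b + s *\<^sub>R d') (b + s *\<^sub>R d') = 2 * s"
      "rinner G (a + s *\<^sub>R c') (b + s *\<^sub>R d') = 0"
      using aa bb ab frame by (simp_all add: rinner_simps)
    then have "charpoly (cjacobi G R (of_real_vec (a + s *\<^sub>R c') + \<i> *s of_real_vec (b + s *\<^sub>R d')))
        = (\<lambda>\<mu>. \<mu> ^ CARD('n))"
      using \<open>s \<in> {0<..<1}\<close> by (intro charpoly_cjacobi_orthogonal_equal_norms) simp_all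
    moreover have "of_real_vec (a + s *\<^sub>R c') + \<i> *s of_real_vec (b + s *\<^sub>R d') = x + of_real s *s y"
      by (simp add: x_def y_def of_real_vec_def Finite_Cartesian_Product.vec_eq_iff algebra_simps)
    ultimately show "charpoly (cjacobi G R (x + of_real s *s y)) \<mu> = \<mu> ^ CARD('n)"
      by simp
  qed (simp add: holomorphic_intros)
  from this[of 0] show "charpoly (cjacobi G R (of_real_vec a + \<i> *s of_real_vec b)) \<mu> = \<mu> ^ CARD('n)"
    by (simp add: x_def)
qed

lemma charpoly_cjacobi_null:
  assumes null: "cinner G x x = 0" and "x \<noteq> 0"
  shows "charpoly (cjacobi G R x) = (\<lambda>\<mu>. \<mu> ^ CARD('n))"
proof -
  define a where "a = (\<chi> i. Re (x$i))"
  define b where "b = (\<chi> i. Im (x$i))"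
  have x: "x = of_real_vec a + \<i> *s of_real_vec b"
    unfolding a_def b_def by (rule complex_vec_decompose)
  have ab: "rinner G a a = rinner G b b" "rinner G a b = 0"
    using null cinner_complexified[of a b] by (simp_all add: x complex_eq_iff)
  consider "rinner G a a \<noteq> 0"
    | "rinner G a a = 0" "\<And>l m. l *\<^sub>R a + m *\<^sub>R b = 0 \<Longrightarrow> l = 0 \<and> m = 0"
    | l m where "l *\<^sub>R a + m *\<^sub>R b = 0" "l \<noteq> 0 \<or> m \<noteq> 0"
    by blast
  then show ?thesis
  proof cases
    case 1
    then show ?thesis
      using charpoly_cjacobi_orthogonal_equal_norms[OF ab] by (simp add: x)
  next
    case 2
    then show ?thesis
      using charpoly_cjacobi_totally_null_pair ab by (simp add: x)
  next
    case 3
    then obtain c v where v: "v = a \<or> v = b" and xv: "x = c *s of_real_vec v"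
      using complexified_dependent_pair x by metis
    have "rinner G v v = 0"
      using dependent_orthogonal_equal_norms_null[OF 3 ab] ab(1) v by auto
    moreover have "v \<noteq> 0" "c \<noteq> 0"
      using \<open>x \<noteq> 0\<close> xv by auto
    ultimately show ?thesis
      using charpoly_cjacobi_scale[OF charpoly_cjacobi_real_null] by (simp add: xv)
  qed
qed

end

theorem theorem1p1:
  fixes G :: "real^'n^'n" and R :: "'n \<Rightarrow> 'n \<Rightarrow> 'n \<Rightarrow> 'n \<Rightarrow> real" and k :: nat
  assumes "CARD('n) \<ge> 3"
    and "nondeg_sym_inner G"
    and "algebraic_curvature_tensor R"
    and "1 \<le> k" and "k \<le> CARD('n) - 1"
    and "k_osserman G R k"
  shows "\<forall>x::complex^'n. cinner G x x = 0 \<longrightarrow> nilpotent (cjacobi G R x)"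
proof (intro allI impI)
  fix x :: "complex^'n" assume null: "cinner G x x = 0"
  obtain S where "\<forall>\<sigma> e. nondeg_subspace G \<sigma> \<and> dim \<sigma> = k \<and> orthonormal_basis G \<sigma> k e \<longrightarrow>
      eigenvalues (higher_jacobi G R k e) = S"
    using \<open>k_osserman G R k\<close> unfolding k_osserman_def by blast
  then interpret osserman_form G R k S
    using assms by unfold_locales auto
  show "nilpotent (cjacobi G R x)"
  proof (cases "x = 0")
    case True
    then have "cjacobi G R x = 0"
      using cjacobi_scale[of R 0 0] by simp
    then show ?thesis
      unfolding nilpotent_def by (intro exI[of _ 1]) (simp add: fun_eq_iff)
  next
    case False
    then show ?thesis
      using null by (simp add: charpoly_cjacobi_null nilpotent_if_charpoly_monomial)
  qed
qed

end
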